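(* Danzer's configuration $(35_4)$ is isomorphic to an incidence sum $\mathcal C_1\oplus_I\mathcal C_2$ in which $\mathcal C_1$ is (isomorphic to) the Steiner–Plücker configuration $(20_3,15_4)$ and $\mathcal C_2$ is (isomorphic to) the Cayley–Salmon configuration $(15_4,20_3)$.
   Context: Danzer's configuration $(35_4)$: points are the 4-subsets and lines the 3-subsets of $\{1,\dots,7\}$, a point incident with a line iff the line's subset is contained in the point's subset (equivalently, the points and lines in which seven hyperplanes in general position in projective 4-space meet by fours and by threes). Steiner–Plücker configuration: three triangles $A_iB_iC_i$ ($i=1,2,3$) perspective from a common point $O$; for each pair $i<j$ the corresponding sides meet in three points lying on an axis $a_{ij}$, and the three axes meet in a point $Z$. Points: $O$, the 9 vertices, the 9 side-intersection points, $Z$ (20 points); lines: the 3 lines through $O$ and corresponding vertices, the 9 sides, the 3 axes (15 lines), with the natural incidences (4 points per line, 3 lines per point). Cayley–Salmon configuration: three triangles $A_iB_iC_i$ perspective from a common line $\ell$ (corresponding sides of all three meet in three points $X_{AB},X_{BC},X_{CA}$ of $\ell$); for each pair $i<j$ they are perspective from a centre $O_{ij}$, and the three centres lie on a line $m$. Points: 9 vertices, $X_{AB},X_{BC},X_{CA}$, $O_{12},O_{13},O_{23}$ (15 points); lines: $\ell$, 9 sides, the 9 lines joining corresponding vertices, $m$ (20 lines), with the natural incidences (3 points per line, 4 lines per point). Incidence sum: for configurations $\mathcal C_1,\mathcal C_2$ with point sets $\mathcal P_i$ and line sets $\mathcal L_i$, and $I\subseteq\mathcal P_1\times\mathcal L_2\cup\mathcal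 P_2\times\mathcal L_1$, $\mathcal C_1\oplus_I\mathcal C_2$ is the incidence structure on points $\mathcal P_1\sqcup\mathcal P_2$ and lines $\mathcal L_1\sqcup\mathcal L_2$ whose incidences are those of $\mathcal C_1$, those of $\mathcal C_2$, and the pairs in $I$. *)

theory Defs
  imports Main
begin

record ('p, 'l) config =
  pts :: "'p set"
  lns :: "'l set"
  inc :: "'p \<Rightarrow> 'l \<Rightarrow> bool"

definition config_iso :: "('p, 'l) config \<Rightarrow> ('q, 'm) config \<Rightarrow> bool" where
  "config_iso C D \<longleftrightarrow> (\<exists>f g. bij_betw f (pts C) (pts D) \<and> bij_betw g (lns C) (lns D) \<and>
      (\<forall>p\<in>pts C. \<forall>l\<in>lns C. inc C p l \<longleftrightarrow> inc D (f p) (g l)))"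

text \<open>The extra incidence set I \<subseteq> P1 \<times> L2 \<union> P2 \<times> L1 is given as
  its two parts I12 \<subseteq> P1 \<times> L2 and I21 \<subseteq> P2 \<times> L1; the disjoint unions are sum types.\<close>

fun sum_inc :: "('p1, 'l1) config \<Rightarrow> ('p2, 'l2) config \<Rightarrow> ('p1 \<times> 'l2) set \<Rightarrow> ('p2 \<times> 'l1) set
    \<Rightarrow> 'p1 + 'p2 \<Rightarrow> 'l1 + 'l2 \<Rightarrow> bool" where
  "sum_inc C1 C2 I12 I21 (Inl p) (Inl l) = inc C1 p l"
| "sum_inc C1 C2 I12 I21 (Inr p) (Inr l) = inc C2 p l"
| "sum_inc C1 C2 I12 I21 (Inl p) (Inr l) = ((p, l) \<in> I12)"
| "sum_inc C1 C2 I12 I21 (Inr p) (Inl l) = ((p, l) \<in> I21)"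

definition incidence_sum :: "('p1, 'l1) config \<Rightarrow> ('p2, 'l2) config \<Rightarrow> ('p1 \<times> 'l2) set \<Rightarrow> ('p2 \<times> 'l1) set
    \<Rightarrow> ('p1 + 'p2, 'l1 + 'l2) config" where
  "incidence_sum C1 C2 I12 I21 =
     \<lparr> pts = Inl ` pts C1 \<union> Inr ` pts C2,
       lns = Inl ` lns C1 \<union> Inr ` lns C2,
       inc = sum_inc C1 C2 I12 I21 \<rparr>"

definition valid_extra :: "('p1, 'l1) config \<Rightarrow> ('p2, 'l2) config \<Rightarrow> ('p1 \<times> 'l2) set \<Rightarrow> ('p2 \<times> 'l1) set \<Rightarrow> bool" where
  "valid_extra C1 C2 I12 I21 \<longleftrightarrow> I12 \<subseteq> pts C1 \<times> lns C2 \<and> I21 \<subseteq> pts C2 \<times> lns C1"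

definition danzer :: "(nat set, nat set) config" where
  "danzer = \<lparr> pts = {S. S \<subseteq> {1..7} \<and> card S = 4},
              lns = {S. S \<subseteq> {1..7} \<and> card S = 3},
              inc = (\<lambda>P L. L \<subseteq> P) \<rparr>"

datatype tri = T1 | T2 | T3
datatype vtx = VA | VB | VC
datatype side = SAB | SBC | SCA
datatype tpair = P12 | P13 | P23

fun side_has :: "side \<Rightarrow> vtx \<Rightarrow> bool" where
  "side_has SAB v = (v = VA \<or> v = VB)"
| "side_has SBC v = (v = VB \<or> v = VC)"
| "side_has SCA v = (v = VC \<or> v = VA)"

fun in_pair :: "tri \<Rightarrow> tpair \<Rightarrow> bool" where
  "in_pair i P12 = (i = T1 \<or> i = T2)"
| "in_pair i P13 = (i = T1 \<or> i = T3)"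
| "in_pair i P23 = (i = T2 \<or> i = T3)"

datatype sp_point = SP_O | SP_V vtx tri | SP_X side tpair | SP_Z
  \<comment> \<open>O; vertex V_i; intersection of the corresponding sides of type s of triangles i,j; Z\<close>
datatype sp_line = SP_OL vtx | SP_Side side tri | SP_Axis tpair
  \<comment> \<open>line through O and V_1,V_2,V_3; side of type s of triangle i; axis a_ij\<close>

fun sp_inc :: "sp_point \<Rightarrow> sp_line \<Rightarrow> bool" where
  "sp_inc SP_O (SP_OL w) = True"
| "sp_inc (SP_V v i) (SP_OL w) = (v = w)"
| "sp_inc (SP_V v i) (SP_Side s j) = (i = j \<and> side_has s v)"
| "sp_inc (SP_X s p) (SP_Side s' j) = (s = s' \<and> in_pair j p)"
| "sp_inc (SP_X s p) (SP_Axis q) = (p = q)"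
| "sp_inc SP_Z (SP_Axis q) = True"
| "sp_inc _ _ = False"

definition steiner_pluecker :: "(sp_point, sp_line) config" where
  "steiner_pluecker = \<lparr> pts = UNIV, lns = UNIV, inc = sp_inc \<rparr>"

datatype cs_point = CS_V vtx tri | CS_X side | CS_O tpair
  \<comment> \<open>vertex V_i; X_s on l; perspectivity centre O_ij\<close>
datatype cs_line = CS_ell | CS_Side side tri | CS_Join vtx tpair | CS_m
  \<comment> \<open>l; side of type s of triangle i; line V_i V_j; m\<close>

fun cs_inc :: "cs_point \<Rightarrow> cs_line \<Rightarrow> bool" where
  "cs_inc (CS_V v i) (CS_Side s j) = (i = j \<and> side_has s v)"
| "cs_inc (CS_V v i) (CS_Join w p) = (v = w \<and> in_pair i p)"
| "cs_inc (CS_X s) CS_ell = True"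
| "cs_inc (CS_X s) (CS_Side s' j) = (s = s')"
| "cs_inc (CS_O p) (CS_Join w q) = (p = q)"
| "cs_inc (CS_O p) CS_m = True"
| "cs_inc _ _ = False"

definition cayley_salmon :: "(cs_point, cs_line) config" where
  "cayley_salmon = \<lparr> pts = UNIV, lns = UNIV, inc = cs_inc \<rparr>"

end

theory Submission
  imports Defs
begin

text \<open>Label the vertex letters A, B, C by 1, 2, 3 and the three triangles by 4, 5, 6. Then the
  Steiner--Pluecker configuration is the configuration of 3-subsets (points) and 2-subsets (lines)
  of {1..6} under inclusion L \<subseteq> P, and the Cayley--Salmon configuration that of 2-subsets
  (points) and 3-subsets (lines) under inclusion P \<subseteq> L. Adjoining 7 to the former and taking
  complements in {1..6} of the latter sends both into the 4-subsets and 3-subsets of {1..7},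
  preserving incidence in each case: the Danzer points and lines containing 7 form the first
  summand, the others the second, and the Danzer incidences between the two halves are the extra
  incidences of the sum. The labelling is injective because in both configurations distinct points
  lie on distinct sets of lines and vice versa, hence bijective by counting: 20 + 15 = 35 =
  C(7,4) = C(7,3).\<close>

lemma config_iso_refl: "config_iso C C"
  unfolding config_iso_def by (intro exI[of _ id]) simp

lemma config_iso_sym:
  assumes "config_iso C D"
  shows "config_iso D C"
proof -
  from assms obtain f g where f: "bij_betw f (pts C) (pts D)" and g: "bij_betw g (lns C) (lns D)"
    and inc: "\<forall>p\<in>pts C. \<forall>l\<in>lns C. inc C p l \<longleftrightarrow> inc D (f p) (g l)"
    unfolding config_iso_def by blast
  let ?f' = "inv_into (pts C) f" and ?g' = "inv_into (lns C) g"
  have "inc D p l \<longleftrightarrow> inc C (?f' p) (?g' l)" if "p \<in> pts D" "l \<in> lns D" for p l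
  proof -
    have "?f' p \<in> pts C" "?g' l \<in> lns C" "f (?f' p) = p" "g (?g' l) = l"
      using that f g by (auto simp: bij_betw_def inv_into_into f_inv_into_f)
    then show ?thesis using inc by metis
  qed
  moreover have "bij_betw ?f' (pts D) (pts C)" "bij_betw ?g' (lns D) (lns C)"
    using f g by (auto intro: bij_betw_inv_into)
  ultimately show ?thesis unfolding config_iso_def by blast
qed

lemma bij_betw_card_subsets:
  fixes f :: "'a \<Rightarrow> 'b set"
  assumes "inj f" and f_into: "\<And>x. f x \<subseteq> A \<and> card (f x) = k" and "finite A"
    and card_UNIV: "card (UNIV :: 'a set) = card A choose k"
  shows "bij_betw f UNIV {S. S \<subseteq> A \<and> card S = k}"
proof -
  let ?B = "{S. S \<subseteq> A \<and> card S = k}"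
  have "finite ?B" using \<open>finite A\<close> by (auto intro: finite_subset[of _ "Pow A"])
  moreover have "range f \<subseteq> ?B" using f_into by auto
  moreover have "card (range f) = card ?B"
    using card_image[OF \<open>inj f\<close>] card_UNIV n_subsets[OF \<open>finite A\<close>] by simp
  ultimately have "range f = ?B" by (rule card_subset_eq)
  with \<open>inj f\<close> show ?thesis unfolding bij_betw_def by simp
qed

lemma all_vtx: "(\<forall>v. P v) \<longleftrightarrow> P VA \<and> P VB \<and> P VC"
  by (metis vtx.exhaust)

lemma all_tri: "(\<forall>i. P i) \<longleftrightarrow> P T1 \<and> P T2 \<and> P T3"
  by (metis tri.exhaust)

lemma all_side: "(\<forall>s. P s) \<longleftrightarrow> P SAB \<and> P SBC \<and> P SCA"
  by (metis side.exhaust)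

lemma all_tpair: "(\<forall>q. P q) \<longleftrightarrow> P P12 \<and> P P13 \<and> P P23"
  by (metis tpair.exhaust)

lemma all_sp_point:
  "(\<forall>p. P p) \<longleftrightarrow> P SP_O \<and> P SP_Z \<and> (\<forall>v i. P (SP_V v i)) \<and> (\<forall>s q. P (SP_X s q))"
  by (metis sp_point.exhaust)

lemma all_sp_line: "(\<forall>l. P l) \<longleftrightarrow> (\<forall>v. P (SP_OL v)) \<and> (\<forall>s i. P (SP_Side s i)) \<and> (\<forall>q. P (SP_Axis q))"
  by (metis sp_line.exhaust)

lemma all_cs_point: "(\<forall>p. P p) \<longleftrightarrow> (\<forall>v i. P (CS_V v i)) \<and> (\<forall>s. P (CS_X s)) \<and> (\<forall>q. P (CS_O q))"
  by (metis cs_point.exhaust)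

lemma all_cs_line:
  "(\<forall>l. P l) \<longleftrightarrow> P CS_ell \<and> P CS_m \<and> (\<forall>s i. P (CS_Side s i)) \<and> (\<forall>w q. P (CS_Join w q))"
  by (metis cs_line.exhaust)

lemmas all_labels = all_vtx all_tri all_side all_tpair

lemma card_UNIV_sp_point: "card (UNIV :: sp_point set) = 20"
proof -
  have enum: "(UNIV :: sp_point set) = {SP_O, SP_Z,
      SP_V VA T1, SP_V VA T2, SP_V VA T3, SP_V VB T1, SP_V VB T2, SP_V VB T3,
      SP_V VC T1, SP_V VC T2, SP_V VC T3, SP_X SAB P12, SP_X SAB P13, SP_X SAB P23,
      SP_X SBC P12, SP_X SBC P13, SP_X SBC P23, SP_X SCA P12, SP_X SCA P13, SP_X SCA P23}"
    by (simp add: set_eq_iff all_sp_point all_labels)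
  show ?thesis unfolding enum by simp
qed

lemma card_UNIV_sp_line: "card (UNIV :: sp_line set) = 15"
proof -
  have enum: "(UNIV :: sp_line set) = {SP_OL VA, SP_OL VB, SP_OL VC,
      SP_Side SAB T1, SP_Side SAB T2, SP_Side SAB T3, SP_Side SBC T1, SP_Side SBC T2,
      SP_Side SBC T3, SP_Side SCA T1, SP_Side SCA T2, SP_Side SCA T3,
      SP_Axis P12, SP_Axis P13, SP_Axis P23}"
    by (simp add: set_eq_iff all_sp_line all_labels)
  show ?thesis unfolding enum by simp
qed

lemma card_UNIV_cs_point: "card (UNIV :: cs_point set) = 15"
proof -
  have enum: "(UNIV :: cs_point set) = {CS_V VA T1, CS_V VA T2, CS_V VA T3, CS_V VB T1,
      CS_V VB T2, CS_V VB T3, CS_V VC T1, CS_V VC T2, CS_V VC T3,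
      CS_X SAB, CS_X SBC, CS_X SCA, CS_O P12, CS_O P13, CS_O P23}"
    by (simp add: set_eq_iff all_cs_point all_labels)
  show ?thesis unfolding enum by simp
qed

lemma card_UNIV_cs_line: "card (UNIV :: cs_line set) = 20"
proof -
  have enum: "(UNIV :: cs_line set) = {CS_ell, CS_m,
      CS_Side SAB T1, CS_Side SAB T2, CS_Side SAB T3, CS_Side SBC T1, CS_Side SBC T2,
      CS_Side SBC T3, CS_Side SCA T1, CS_Side SCA T2, CS_Side SCA T3,
      CS_Join VA P12, CS_Join VA P13, CS_Join VA P23, CS_Join VB P12, CS_Join VB P13,
      CS_Join VB P23, CS_Join VC P12, CS_Join VC P13, CS_Join VC P23}"
    by (simp add: set_eq_iff all_cs_line all_labels)
  show ?thesis unfolding enum by simp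
qed

lemma card_UNIV_points: "card (UNIV :: (sp_point + cs_point) set) = 35"
proof -
  have "finite (UNIV :: sp_point set)" "finite (UNIV :: cs_point set)"
    using card_UNIV_sp_point card_UNIV_cs_point by (auto intro: card_ge_0_finite)
  then show ?thesis
    by (simp add: UNIV_Plus_UNIV[symmetric] card_Plus card_UNIV_sp_point card_UNIV_cs_point
        del: UNIV_Plus_UNIV)
qed

lemma card_UNIV_lines: "card (UNIV :: (sp_line + cs_line) set) = 35"
proof -
  have "finite (UNIV :: sp_line set)" "finite (UNIV :: cs_line set)"
    using card_UNIV_sp_line card_UNIV_cs_line by (auto intro: card_ge_0_finite)
  then show ?thesis
    by (simp add: UNIV_Plus_UNIV[symmetric] card_Plus card_UNIV_sp_line card_UNIV_cs_line
        del: UNIV_Plus_UNIV)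
qed

fun vtx_num :: "vtx \<Rightarrow> nat" where
  "vtx_num VA = 1" | "vtx_num VB = 2" | "vtx_num VC = 3"

fun tri_num :: "tri \<Rightarrow> nat" where
  "tri_num T1 = 4" | "tri_num T2 = 5" | "tri_num T3 = 6"

fun other_vtx_nums :: "vtx \<Rightarrow> nat set" where
  "other_vtx_nums VA = {2, 3}" | "other_vtx_nums VB = {1, 3}" | "other_vtx_nums VC = {1, 2}"

fun side_nums :: "side \<Rightarrow> nat set" where
  "side_nums SAB = {1, 2}" | "side_nums SBC = {2, 3}" | "side_nums SCA = {1, 3}"

fun opposite_num :: "side \<Rightarrow> nat" where
  "opposite_num SAB = 3" | "opposite_num SBC = 1" | "opposite_num SCA = 2"

fun tpair_nums :: "tpair \<Rightarrow> nat set" where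
  "tpair_nums P12 = {4, 5}" | "tpair_nums P13 = {4, 6}" | "tpair_nums P23 = {5, 6}"

fun sp_point_set :: "sp_point \<Rightarrow> nat set" where
  "sp_point_set SP_O = {1, 2, 3}"
| "sp_point_set SP_Z = {4, 5, 6}"
| "sp_point_set (SP_V v i) = insert (tri_num i) (other_vtx_nums v)"
| "sp_point_set (SP_X s q) = insert (opposite_num s) (tpair_nums q)"

fun sp_line_set :: "sp_line \<Rightarrow> nat set" where
  "sp_line_set (SP_OL v) = other_vtx_nums v"
| "sp_line_set (SP_Side s i) = {opposite_num s, tri_num i}"
| "sp_line_set (SP_Axis q) = tpair_nums q"

fun cs_point_set :: "cs_point \<Rightarrow> nat set" where
  "cs_point_set (CS_V v i) = {vtx_num v, tri_num i}"
| "cs_point_set (CS_X s) = side_nums s"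
| "cs_point_set (CS_O q) = tpair_nums q"

fun cs_line_set :: "cs_line \<Rightarrow> nat set" where
  "cs_line_set CS_ell = {1, 2, 3}"
| "cs_line_set CS_m = {4, 5, 6}"
| "cs_line_set (CS_Side s i) = insert (tri_num i) (side_nums s)"
| "cs_line_set (CS_Join w q) = insert (vtx_num w) (tpair_nums q)"

lemma sp_inc_iff: "sp_inc p l \<longleftrightarrow> sp_line_set l \<subseteq> sp_point_set p"
proof -
  have "\<forall>p l. sp_inc p l \<longleftrightarrow> sp_line_set l \<subseteq> sp_point_set p"
    by (simp add: all_sp_point all_sp_line all_labels)
  then show ?thesis by blast
qed

lemma cs_inc_iff: "cs_inc p l \<longleftrightarrow> cs_point_set p \<subseteq> cs_line_set l"
proof -
  have "\<forall>p l. cs_inc p l \<longleftrightarrow> cs_point_set p \<subseteq> cs_line_set l"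
    by (simp add: all_cs_point all_cs_line all_labels)
  then show ?thesis by blast
qed

lemma sp_point_eqI:
  assumes "\<And>l. sp_inc p l \<longleftrightarrow> sp_inc p' l"
  shows "p = p'"
proof -
  have "\<forall>p p'. (\<forall>l. sp_inc p l \<longleftrightarrow> sp_inc p' l) \<longrightarrow> p = p'"
    by (simp add: all_sp_point all_sp_line all_labels)
  with assms show ?thesis by blast
qed

lemma sp_line_eqI:
  assumes "\<And>p. sp_inc p l \<longleftrightarrow> sp_inc p l'"
  shows "l = l'"
proof -
  have "\<forall>l l'. (\<forall>p. sp_inc p l \<longleftrightarrow> sp_inc p l') \<longrightarrow> l = l'"
    by (simp add: all_sp_point all_sp_line all_labels)
  with assms show ?thesis by blast
qed

lemma cs_point_eqI:
  assumes "\<And>l. cs_inc p l \<longleftrightarrow> cs_inc p' l"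
  shows "p = p'"
proof -
  have "\<forall>p p'. (\<forall>l. cs_inc p l \<longleftrightarrow> cs_inc p' l) \<longrightarrow> p = p'"
    by (simp add: all_cs_point all_cs_line all_labels)
  with assms show ?thesis by blast
qed

lemma cs_line_eqI:
  assumes "\<And>p. cs_inc p l \<longleftrightarrow> cs_inc p l'"
  shows "l = l'"
proof -
  have "\<forall>l l'. (\<forall>p. cs_inc p l \<longleftrightarrow> cs_inc p l') \<longrightarrow> l = l'"
    by (simp add: all_cs_point all_cs_line all_labels)
  with assms show ?thesis by blast
qed

lemma inj_sp_point_set: "inj sp_point_set"
  by (rule injI) (metis sp_point_eqI sp_inc_iff)

lemma inj_sp_line_set: "inj sp_line_set"
  by (rule injI) (metis sp_line_eqI sp_inc_iff)

lemma inj_cs_point_set: "inj cs_point_set"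
  by (rule injI) (metis cs_point_eqI cs_inc_iff)

lemma inj_cs_line_set: "inj cs_line_set"
  by (rule injI) (metis cs_line_eqI cs_inc_iff)

lemma sp_point_set_3_subset: "sp_point_set p \<subseteq> {1..6} \<and> card (sp_point_set p) = 3"
proof -
  have "\<forall>p. sp_point_set p \<subseteq> {1..6} \<and> card (sp_point_set p) = 3"
    by (simp add: all_sp_point all_labels)
  then show ?thesis ..
qed

lemma sp_line_set_2_subset: "sp_line_set l \<subseteq> {1..6} \<and> card (sp_line_set l) = 2"
proof -
  have "\<forall>l. sp_line_set l \<subseteq> {1..6} \<and> card (sp_line_set l) = 2"
    by (simp add: all_sp_line all_labels)
  then show ?thesis ..
qed

lemma cs_point_set_2_subset: "cs_point_set p \<subseteq> {1..6} \<and> card (cs_point_set p) = 2"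
proof -
  have "\<forall>p. cs_point_set p \<subseteq> {1..6} \<and> card (cs_point_set p) = 2"
    by (simp add: all_cs_point all_labels)
  then show ?thesis ..
qed

lemma cs_line_set_3_subset: "cs_line_set l \<subseteq> {1..6} \<and> card (cs_line_set l) = 3"
proof -
  have "\<forall>l. cs_line_set l \<subseteq> {1..6} \<and> card (cs_line_set l) = 3"
    by (simp add: all_cs_line all_labels)
  then show ?thesis ..
qed

lemma inj_case_sum_insert_Diff:
  assumes "inj f" "inj g" "\<And>x. f x \<subseteq> D" "\<And>y. g y \<subseteq> D" "a \<notin> D"
  shows "inj (case_sum (\<lambda>x. insert a (f x)) (\<lambda>y. D - g y))"
proof (rule injI)
  fix u v assume eq: "case_sum (\<lambda>x. insert a (f x)) (\<lambda>y. D - g y) u =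
    case_sum (\<lambda>x. insert a (f x)) (\<lambda>y. D - g y) v"
  show "u = v"
  proof (cases u; cases v)
    fix x x' assume "u = Inl x" "v = Inl x'"
    moreover have "a \<notin> f x" "a \<notin> f x'" using assms(3,5) by blast+
    ultimately have "f x = f x'" using eq by (simp add: insert_ident)
    with \<open>u = Inl x\<close> \<open>v = Inl x'\<close> show "u = v" using \<open>inj f\<close> by (simp add: inj_eq)
  next
    fix y y' assume "u = Inr y" "v = Inr y'"
    then have "g y = g y'" using eq assms(4) by (metis double_diff order_refl sum.simps(6))
    with \<open>u = Inr y\<close> \<open>v = Inr y'\<close> show "u = v" using \<open>inj g\<close> by (simp add: inj_eq)
  qed (use eq \<open>a \<notin> D\<close> in auto)
qed

definition danzer_point :: "sp_point + cs_point \<Rightarrow> nat set" where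
  "danzer_point = case_sum (\<lambda>p. insert 7 (sp_point_set p)) (\<lambda>p. {1..6} - cs_point_set p)"

definition danzer_line :: "sp_line + cs_line \<Rightarrow> nat set" where
  "danzer_line = case_sum (\<lambda>l. insert 7 (sp_line_set l)) (\<lambda>l. {1..6} - cs_line_set l)"

lemma inj_danzer_point: "inj danzer_point"
  unfolding danzer_point_def
  using inj_sp_point_set inj_cs_point_set sp_point_set_3_subset cs_point_set_2_subset
  by (intro inj_case_sum_insert_Diff) auto

lemma inj_danzer_line: "inj danzer_line"
  unfolding danzer_line_def
  using inj_sp_line_set inj_cs_line_set sp_line_set_2_subset cs_line_set_3_subset
  by (intro inj_case_sum_insert_Diff) auto

lemma danzer_point_4_subset: "danzer_point x \<subseteq> {1..7} \<and> card (danzer_point x) = 4"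
proof (cases x)
  case (Inl p)
  have "sp_point_set p \<subseteq> {1..6}" "card (sp_point_set p) = 3"
    using sp_point_set_3_subset by blast+
  moreover from this have "7 \<notin> sp_point_set p" "finite (sp_point_set p)"
    by (auto intro: finite_subset)
  ultimately show ?thesis using Inl by (auto simp: danzer_point_def)
next
  case (Inr p)
  have "cs_point_set p \<subseteq> {1..6}" "card (cs_point_set p) = 2"
    using cs_point_set_2_subset by blast+
  moreover from this have "finite (cs_point_set p)" by (auto intro: finite_subset)
  ultimately show ?thesis using Inr by (auto simp: danzer_point_def card_Diff_subset)
qed

lemma danzer_line_3_subset: "danzer_line y \<subseteq> {1..7} \<and> card (danzer_line y) = 3"
proof (cases y)
  case (Inl l)
  have "sp_line_set l \<subseteq> {1..6}" "card (sp_line_set l) = 2"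
    using sp_line_set_2_subset by blast+
  moreover from this have "7 \<notin> sp_line_set l" "finite (sp_line_set l)"
    by (auto intro: finite_subset)
  ultimately show ?thesis using Inl by (auto simp: danzer_line_def)
next
  case (Inr l)
  have "cs_line_set l \<subseteq> {1..6}" "card (cs_line_set l) = 3"
    using cs_line_set_3_subset by blast+
  moreover from this have "finite (cs_line_set l)" by (auto intro: finite_subset)
  ultimately show ?thesis using Inr by (auto simp: danzer_line_def card_Diff_subset)
qed

lemma bij_danzer_point: "bij_betw danzer_point UNIV (pts danzer)"
proof -
  have "card (UNIV :: (sp_point + cs_point) set) = card {1..7::nat} choose 4"
    by (simp add: card_UNIV_points numeral_eq_Suc)
  then have "bij_betw danzer_point UNIV {S. S \<subseteq> {1..7} \<and> card S = 4}"
    by (rule bij_betw_card_subsets[OF inj_danzer_point danzer_point_4_subset finite_atLeastAtMost])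
  then show ?thesis by (simp add: danzer_def)
qed

lemma bij_danzer_line: "bij_betw danzer_line UNIV (lns danzer)"
proof -
  have "card (UNIV :: (sp_line + cs_line) set) = card {1..7::nat} choose 3"
    by (simp add: card_UNIV_lines numeral_eq_Suc)
  then have "bij_betw danzer_line UNIV {S. S \<subseteq> {1..7} \<and> card S = 3}"
    by (rule bij_betw_card_subsets[OF inj_danzer_line danzer_line_3_subset finite_atLeastAtMost])
  then show ?thesis by (simp add: danzer_def)
qed

definition sp_cs_extra :: "(sp_point \<times> cs_line) set" where
  "sp_cs_extra = {(p, l). danzer_line (Inr l) \<subseteq> danzer_point (Inl p)}"

definition cs_sp_extra :: "(cs_point \<times> sp_line) set" where
  "cs_sp_extra = {(p, l). danzer_line (Inl l) \<subseteq> danzer_point (Inr p)}"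

abbreviation danzer_sum :: "(sp_point + cs_point, sp_line + cs_line) config" where
  "danzer_sum \<equiv> incidence_sum steiner_pluecker cayley_salmon sp_cs_extra cs_sp_extra"

lemma inc_danzer_sum_iff: "inc danzer_sum x y \<longleftrightarrow> danzer_line y \<subseteq> danzer_point x"
proof (cases x; cases y)
  fix p l assume "x = Inl p" "y = Inl l"
  moreover have "7 \<notin> sp_line_set l" using sp_line_set_2_subset by fastforce
  ultimately show ?thesis
    by (simp add: incidence_sum_def steiner_pluecker_def danzer_point_def danzer_line_def
        sp_inc_iff subset_insert)
next
  fix p l assume "x = Inr p" "y = Inr l"
  moreover have "cs_point_set p \<subseteq> {1..6}" "cs_line_set l \<subseteq> {1..6}"
    using cs_point_set_2_subset cs_line_set_3_subset by blast+
  ultimately show ?thesis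
    by (auto simp: incidence_sum_def cayley_salmon_def danzer_point_def danzer_line_def
        cs_inc_iff)
qed (simp_all add: incidence_sum_def sp_cs_extra_def cs_sp_extra_def)

lemma config_iso_danzer_sum: "config_iso danzer_sum danzer"
  unfolding config_iso_def
proof (intro exI conjI)
  show "bij_betw danzer_point (pts danzer_sum) (pts danzer)"
    "bij_betw danzer_line (lns danzer_sum) (lns danzer)"
    using bij_danzer_point bij_danzer_line
    by (simp_all add: incidence_sum_def steiner_pluecker_def cayley_salmon_def UNIV_sum[symmetric])
  show "\<forall>p\<in>pts danzer_sum. \<forall>l\<in>lns danzer_sum.
      inc danzer_sum p l \<longleftrightarrow> inc danzer (danzer_point p) (danzer_line l)"
    by (simp add: inc_danzer_sum_iff danzer_def)
qed

theorem theorem4p6: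
  shows "\<exists>(C1 :: (sp_point, sp_line) config) (C2 :: (cs_point, cs_line) config) I12 I21.
           config_iso C1 steiner_pluecker \<and> config_iso C2 cayley_salmon \<and>
           valid_extra C1 C2 I12 I21 \<and>
           config_iso danzer (incidence_sum C1 C2 I12 I21)"
proof (intro exI conjI)
  show "config_iso steiner_pluecker steiner_pluecker" "config_iso cayley_salmon cayley_salmon"
    by (fact config_iso_refl)+
  show "valid_extra steiner_pluecker cayley_salmon sp_cs_extra cs_sp_extra"
    by (simp add: valid_extra_def steiner_pluecker_def cayley_salmon_def)
  show "config_iso danzer danzer_sum"
    by (rule config_iso_sym[OF config_iso_danzer_sum])
qed

end
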